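(* Let $C$ be a normal closed cone with nonempty interior in a real Banach space. Let $f:\operatorname{int} C \to \operatorname{int} C$ be type K order-preserving and homogeneous, and let $g(x) = f(x)/\|f(x)\|$ for $x \in \operatorname{int} C$. Suppose $f$ has an eigenvector in $\operatorname{int} C$. Then for every $x \in \operatorname{int} C$ such that the orbit $\mathcal{O}(x,g) = \{g^k(x) : k\in\mathbb{N}\}$ has compact closure, the sequence $g^k(x)$ converges to an eigenvector of $f$.
   Context: A closed cone is a closed convex set $C \subset X$ with $\lambda C \subset C$ for $\lambda \ge 0$ and $C \cap (-C) = \{0\}$; $x\le y$ means $y-x\in C$. $C$ is normal if there is $\kappa > 0$ with $\|x\| \le \kappa \|y\|$ whenever $0 \le x \le y$. $f$ is homogeneous if $f(tx) = t f(x)$ for all $t>0$; it is type K order-preserving if for any $x \le y$ in its domain there is $\epsilon > 0$ with $f(y) - f(x) \ge \epsilon(y - x)$. *)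

theory Defs
  imports "HOL-Analysis.Analysis"
begin

definition closed_cone :: "'a::real_normed_vector set \<Rightarrow> bool" where
  "closed_cone C \<longleftrightarrow> closed C \<and> convex C \<and> (\<forall>t::real. \<forall>x\<in>C. t \<ge> 0 \<longrightarrow> t *\<^sub>R x \<in> C)
     \<and> C \<inter> uminus ` C = {0}"

definition cone_le :: "'a::real_normed_vector set \<Rightarrow> 'a \<Rightarrow> 'a \<Rightarrow> bool" where
  "cone_le C x y \<longleftrightarrow> y - x \<in> C"

definition normal_cone :: "'a::real_normed_vector set \<Rightarrow> bool" where
  "normal_cone C \<longleftrightarrow> (\<exists>\<kappa>>0. \<forall>x y. cone_le C 0 x \<and> cone_le C x y \<longrightarrow> norm x \<le> \<kappa> * norm y)"

definition homogeneous_on :: "'a::real_normed_vector set \<Rightarrow> ('a \<Rightarrow> 'a) \<Rightarrow> bool" where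
  "homogeneous_on D f \<longleftrightarrow> (\<forall>x\<in>D. \<forall>t::real. t > 0 \<longrightarrow> t *\<^sub>R x \<in> D \<longrightarrow> f (t *\<^sub>R x) = t *\<^sub>R f x)"

definition typeK_order_preserving_on ::
  "'a::real_normed_vector set \<Rightarrow> 'a set \<Rightarrow> ('a \<Rightarrow> 'a) \<Rightarrow> bool" where
  "typeK_order_preserving_on C D f \<longleftrightarrow>
     (\<forall>x\<in>D. \<forall>y\<in>D. cone_le C x y \<longrightarrow> (\<exists>\<epsilon>>0. cone_le C (\<epsilon> *\<^sub>R (y - x)) (f y - f x)))"

definition eigenvector_on :: "'a::real_normed_vector set \<Rightarrow> ('a \<Rightarrow> 'a) \<Rightarrow> 'a \<Rightarrow> bool" where
  "eigenvector_on D f v \<longleftrightarrow> v \<in> D \<and> v \<noteq> 0 \<and> (\<exists>c::real. f v = c *\<^sub>R v)"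

end

theory Submission
  imports Defs
begin

text \<open>
  Dividing f by its eigenvalue gives a map F fixing the eigenvector v. The orbit of x under F
  then stays in an order interval [\<alpha> v, \<beta> v], so the compactness of the normalised orbit
  yields a limit point w of the orbit itself. Writing m(a/b) for the largest t with t b \<le> a, the ratios m(F^i x / F^j x) increase
  along the orbit and hence converge; consequently m(F^i w / F^j w) depends only on i - j.
  The type K condition then makes k \<mapsto> m(F^k w / w) log-concave, and a positive log-concave
  sequence starting at 1 and bounded away from 0 cannot decrease at its first step. Thus
  m(F w / w) \<ge> 1, symmetrically m(w / F w) \<ge> 1, and F w = w. Finally the monotone ratios
  m(F^n x / w) and m(w / F^n x) tend to 1 along a subsequence, hence along the whole orbit, and
  normality of the cone turns this into convergence of F^n x to w.
\<close>

lemma log_concave_bounded_below_ge_one: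
  fixes m :: "nat \<Rightarrow> real"
  assumes pos: "\<And>k. m k > 0" and m0: "m 0 = 1"
    and log_concave: "\<And>j. m j * m (j + 2) \<le> (m (j + 1))\<^sup>2"
    and bound: "\<And>k. c \<le> m k" and c: "c > 0"
  shows "1 \<le> m 1"
proof -
  have step: "m (Suc k) \<le> m 1 * m k" for k
  proof (induction k)
    case 0 show ?case using m0 by simp
  next
    case (Suc k)
    have "m (Suc (Suc k)) * m k \<le> m (Suc k) * m (Suc k)"
      using log_concave[of k] by (simp add: power2_eq_square mult.commute)
    also have "\<dots> \<le> (m 1 * m k) * m (Suc k)"
      using Suc pos[of "Suc k"] by (simp add: mult_right_mono)
    finally have "m (Suc (Suc k)) * m k \<le> (m 1 * m (Suc k)) * m k" by (simp add: ac_simps)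
    thus ?case using pos[of k] mult_right_le_imp_le by blast
  qed
  have power_bound: "m k \<le> m 1 ^ k" for k
  proof (induction k)
    case 0 thus ?case using m0 by simp
  next
    case (Suc k)
    have "m (Suc k) \<le> m 1 * m k" using step .
    also have "\<dots> \<le> m 1 * m 1 ^ k" using Suc pos[of 1] by (simp add: mult_left_mono)
    finally show ?case by simp
  qed
  show ?thesis
  proof (rule ccontr)
    assume "\<not> 1 \<le> m 1"
    then obtain n where "m 1 ^ n < c" using real_arch_pow_inv[OF c] by (metis pos not_le)
    thus False using power_bound[of n] bound[of n] by simp
  qed
qed

lemma incseq_tendsto_of_subseq:
  fixes t :: "nat \<Rightarrow> real"
  assumes inc: "incseq t" and r: "strict_mono r" and lim: "(t \<circ> r) \<longlonglongrightarrow> L"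
  shows "t \<longlonglongrightarrow> L"
proof -
  have "incseq (t \<circ> r)" using inc r unfolding incseq_def by (simp add: strict_mono_leD)
  hence "t n \<le> L" for n
    using incseq_le[OF _ lim, of n] inc seq_suble[OF r, of n]
    by (auto simp: incseq_def intro: order_trans[of _ "t (r n)"])
  hence "bdd_above (range t)" by (intro bdd_aboveI) blast
  hence sup: "t \<longlonglongrightarrow> Sup (range t)" using LIMSEQ_incseq_SUP inc by blast
  hence "Sup (range t) = L" using LIMSEQ_subseq_LIMSEQ[OF sup r] lim LIMSEQ_unique by blast
  thus ?thesis using sup by simp
qed

section \<open>Proper closed cones and the ratio m(a/b)\<close>

text \<open>The quantity m(a/b) = sup {t. t b \<le> a} underlying Hilbert's projective metric.\<close>
definition lower_ratio :: "'a::real_normed_vector set \<Rightarrow> 'a \<Rightarrow> 'a \<Rightarrow> real" where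
  "lower_ratio C a b = Sup {t. a - t *\<^sub>R b \<in> C}"

definition order_interval :: "'a::real_normed_vector set \<Rightarrow> 'a \<Rightarrow> 'a \<Rightarrow> 'a set" where
  "order_interval C a b = {u. u - a \<in> C \<and> b - u \<in> C}"

lemma zero_notin_interior_cone:
  fixes C :: "'a::real_normed_vector set" and v :: 'a
  assumes cone: "closed_cone C" and v: "v \<noteq> 0"
  shows "0 \<notin> interior C"
proof
  assume "0 \<in> interior C"
  then obtain e where e: "e > 0" "ball 0 e \<subseteq> C" using mem_interior by blast
  define s where "s = e / (2 * norm v)"
  have s: "s > 0" using e v by (simp add: s_def)
  have "norm (s *\<^sub>R v) = e/2" using v e by (simp add: s_def)
  hence "s *\<^sub>R v \<in> C \<inter> uminus ` C" using e by (auto intro!: image_eqI[of _ uminus "- (s *\<^sub>R v)"])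
  moreover have "C \<inter> uminus ` C = {0}" using cone by (simp add: closed_cone_def)
  ultimately have "s *\<^sub>R v = 0" by blast
  thus False using s v by simp
qed

lemma normal_cone_tendsto_squeeze:
  assumes normal: "normal_cone C" and p: "p \<longlonglongrightarrow> 1" and q: "q \<longlonglongrightarrow> 1"
    and between: "\<forall>\<^sub>F i in sequentially. z i - p i *\<^sub>R a \<in> C \<and> q i *\<^sub>R a - z i \<in> C"
  shows "z \<longlonglongrightarrow> a"
proof -
  obtain \<kappa> where \<kappa>: "\<And>x y. x \<in> C \<Longrightarrow> y - x \<in> C \<Longrightarrow> norm x \<le> \<kappa> * norm y"
    using normal by (auto simp: normal_cone_def cone_le_def)
  let ?G = "\<lambda>i. \<kappa> * \<bar>q i - p i\<bar> * norm a + \<bar>p i - 1\<bar> * norm a"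
  have "?G \<longlonglongrightarrow> \<kappa> * \<bar>1 - 1\<bar> * norm a + \<bar>1 - 1\<bar> * norm a"
    by (intro tendsto_intros p q)
  hence G: "?G \<longlonglongrightarrow> 0" by simp
  have "\<forall>\<^sub>F i in sequentially. norm (z i - a) \<le> ?G i"
    using between
  proof (rule eventually_mono)
    fix i assume i: "z i - p i *\<^sub>R a \<in> C \<and> q i *\<^sub>R a - z i \<in> C"
    have "(q i - p i) *\<^sub>R a - (z i - p i *\<^sub>R a) = q i *\<^sub>R a - z i" by (simp add: algebra_simps)
    hence "norm (z i - p i *\<^sub>R a) \<le> \<kappa> * \<bar>q i - p i\<bar> * norm a" using \<kappa> i by (metis norm_scaleR mult.assoc)
    moreover have "norm (z i - a) \<le> norm (z i - p i *\<^sub>R a) + norm ((p i - 1) *\<^sub>R a)"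
      using norm_triangle_ineq[of "z i - p i *\<^sub>R a" "(p i - 1) *\<^sub>R a"] by (simp add: algebra_simps)
    ultimately show "norm (z i - a) \<le> ?G i" by simp
  qed
  hence "(\<lambda>i. z i - a) \<longlonglongrightarrow> 0" by (rule Lim_null_comparison[OF _ G])
  thus ?thesis using LIM_zero_cancel by blast
qed

locale proper_closed_cone =
  fixes C :: "'a::real_normed_vector set"
  assumes closed_cone: "closed_cone C" and zero_notin_interior: "0 \<notin> interior C"
begin

lemma cone_closed: "closed C"
  using closed_cone by (simp add: closed_cone_def)

lemma scaleR_mem: "a \<in> C \<Longrightarrow> t \<ge> 0 \<Longrightarrow> t *\<^sub>R a \<in> C"
  using closed_cone unfolding closed_cone_def by blast

lemma add_mem:
  assumes "a \<in> C" "b \<in> C"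
  shows "a + b \<in> C"
proof -
  have "(1/2::real) *\<^sub>R a + (1/2::real) *\<^sub>R b \<in> C"
    using closed_cone assms convexD[of C a b "1/2" "1/2"] by (simp add: closed_cone_def)
  hence "(2::real) *\<^sub>R ((1/2::real) *\<^sub>R a + (1/2::real) *\<^sub>R b) \<in> C"
    using scaleR_mem by simp
  thus ?thesis by (simp add: scaleR_add_right)
qed

lemma zero_mem: "0 \<in> C"
  using closed_cone unfolding closed_cone_def by blast

lemma pointed: "a \<in> C \<Longrightarrow> -a \<in> C \<Longrightarrow> a = 0"
  using closed_cone unfolding closed_cone_def by (metis IntI image_eqI minus_minus singletonD)

lemma interior_nonzero: "p \<in> interior C \<Longrightarrow> p \<noteq> 0"
  using zero_notin_interior by blast

lemma interior_scaleR:
  assumes p: "p \<in> interior C" and t: "t > 0"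
  shows "t *\<^sub>R p \<in> interior C"
proof -
  obtain e where e: "e > 0" "ball p e \<subseteq> C" using p mem_interior by blast
  have "ball (t *\<^sub>R p) (t * e) \<subseteq> C"
  proof
    fix z assume "z \<in> ball (t *\<^sub>R p) (t * e)"
    hence "norm (t *\<^sub>R (p - (1/t) *\<^sub>R z)) < t * e"
      using t by (simp add: dist_norm algebra_simps)
    hence "(1/t) *\<^sub>R z \<in> C" using e t by (auto simp: dist_norm)
    hence "t *\<^sub>R ((1/t) *\<^sub>R z) \<in> C" by (rule scaleR_mem) (use t in simp)
    thus "z \<in> C" using t by simp
  qed
  thus ?thesis using mem_interior e t by (metis mult_pos_pos)
qed

lemma interior_add:
  assumes p: "p \<in> interior C" and q: "q \<in> C"
  shows "p + q \<in> interior C"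
proof -
  obtain e where e: "e > 0" "ball p e \<subseteq> C" using p mem_interior by blast
  have "ball (p + q) e \<subseteq> C"
  proof
    fix z assume "z \<in> ball (p + q) e"
    hence "z - q \<in> C" using e by (auto simp: dist_norm algebra_simps)
    thus "z \<in> C" using add_mem[OF _ q] by fastforce
  qed
  thus ?thesis using mem_interior e by blast
qed

lemma interior_absorbing:
  assumes p: "p \<in> interior C"
  shows "\<exists>\<rho>>0. \<forall>h. h + (norm h / \<rho>) *\<^sub>R p \<in> C"
proof -
  obtain e where e: "e > 0" "ball p e \<subseteq> C" using p mem_interior by blast
  have "h + (norm h / (e/2)) *\<^sub>R p \<in> C" for h
  proof (cases "h = 0")
    case True thus ?thesis using zero_mem by simp
  next
    case False
    hence h: "norm h > 0" by simp
    have "dist p (p + ((e/2) / norm h) *\<^sub>R h) = e/2" using h e by (simp add: dist_norm)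
    hence "p + ((e/2) / norm h) *\<^sub>R h \<in> C" using e by auto
    hence "(norm h / (e/2)) *\<^sub>R (p + ((e/2) / norm h) *\<^sub>R h) \<in> C"
      using scaleR_mem e h by simp
    thus ?thesis using h e by (simp add: scaleR_add_right add.commute)
  qed
  thus ?thesis using e by (metis half_gt_zero)
qed

lemma interior_sandwich:
  assumes p: "p \<in> interior C"
  shows "\<exists>\<rho>>0. \<forall>z. z - (1 - norm (z - p) / \<rho>) *\<^sub>R p \<in> C \<and> (1 + norm (z - p) / \<rho>) *\<^sub>R p - z \<in> C"
proof -
  obtain \<rho> where \<rho>: "\<rho> > 0" "\<And>h. h + (norm h / \<rho>) *\<^sub>R p \<in> C"
    using interior_absorbing[OF p] by blast
  have "z - (1 - norm (z - p) / \<rho>) *\<^sub>R p = (z - p) + (norm (z - p) / \<rho>) *\<^sub>R p"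
    and "(1 + norm (z - p) / \<rho>) *\<^sub>R p - z = (p - z) + (norm (p - z) / \<rho>) *\<^sub>R p" for z
    by (simp_all add: algebra_simps norm_minus_commute)
  thus ?thesis using \<rho> by metis
qed

lemma nonneg_of_scaleR_mem:
  assumes b: "b \<in> interior C" and "r *\<^sub>R b \<in> C"
  shows "0 \<le> r"
proof (rule ccontr)
  assume "\<not> 0 \<le> r"
  moreover have "b \<in> C" using b interior_subset by blast
  ultimately have "(- r) *\<^sub>R b \<in> C" using scaleR_mem[of b "- r"] by simp
  hence "- (r *\<^sub>R b) \<in> C" by simp
  hence "r *\<^sub>R b = 0" using pointed assms(2) by blast
  thus False using \<open>\<not> 0 \<le> r\<close> interior_nonzero[OF b] by simp
qed

lemma mem_of_scaleR_diff:
  assumes "c > 0" and "c *\<^sub>R a - b \<in> C"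
  shows "a - (1 / c) *\<^sub>R b \<in> C"
proof -
  have "(1 / c) *\<^sub>R (c *\<^sub>R a - b) \<in> C" using scaleR_mem assms by simp
  thus ?thesis using assms(1) by (simp add: scaleR_right_diff_distrib)
qed

lemma lower_ratio_candidate_exists:
  assumes a: "a \<in> interior C" and b: "b \<in> interior C"
  shows "\<exists>t>0. a - t *\<^sub>R b \<in> C"
proof -
  obtain \<rho> where \<rho>: "\<rho> > 0" "\<And>h. h + (norm h / \<rho>) *\<^sub>R a \<in> C"
    using interior_absorbing[OF a] by blast
  have nb: "norm b > 0" using interior_nonzero[OF b] by simp
  have "(- ((\<rho> / norm b) *\<^sub>R b)) + (norm (- ((\<rho> / norm b) *\<^sub>R b)) / \<rho>) *\<^sub>R a \<in> C" using \<rho> by blast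
  hence "a - (\<rho> / norm b) *\<^sub>R b \<in> C" using nb \<rho> by (simp add: algebra_simps)
  moreover have "\<rho> / norm b > 0" using nb \<rho> by simp
  ultimately show ?thesis by blast
qed

lemma bdd_above_lower_ratio_candidates:
  assumes a: "a \<in> interior C" and b: "b \<in> interior C"
  shows "bdd_above {t. a - t *\<^sub>R b \<in> C}"
proof -
  obtain s where s: "s > 0" "b - s *\<^sub>R a \<in> C" using lower_ratio_candidate_exists[OF b a] by blast
  have "t \<le> 1 / s" if t: "a - t *\<^sub>R b \<in> C" for t
  proof -
    have "(1 / s) *\<^sub>R (b - s *\<^sub>R a) + (a - t *\<^sub>R b) \<in> C"
      using add_mem[OF scaleR_mem[OF s(2)] t] s by simp
    moreover have "(1 / s) *\<^sub>R (b - s *\<^sub>R a) + (a - t *\<^sub>R b) = (1 / s - t) *\<^sub>R b"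
      using s by (simp add: algebra_simps)
    ultimately show ?thesis using nonneg_of_scaleR_mem[OF b] by fastforce
  qed
  thus ?thesis by (intro bdd_aboveI) blast
qed

lemma lower_ratio_mem:
  assumes a: "a \<in> interior C" and b: "b \<in> interior C"
  shows "a - lower_ratio C a b *\<^sub>R b \<in> C"
proof -
  have "{t. a - t *\<^sub>R b \<in> C} = (\<lambda>t. a - t *\<^sub>R b) -` C" by auto
  moreover have "continuous_on UNIV (\<lambda>t. a - t *\<^sub>R b)" by (intro continuous_intros)
  ultimately have cl: "closed {t. a - t *\<^sub>R b \<in> C}" using cone_closed closed_vimage by metis
  have ne: "{t. a - t *\<^sub>R b \<in> C} \<noteq> {}" using lower_ratio_candidate_exists[OF a b] by blast
  show ?thesis
    using closed_contains_Sup[OF ne bdd_above_lower_ratio_candidates[OF a b] cl]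
    by (simp add: lower_ratio_def)
qed

lemma lower_ratio_greatest:
  assumes "a \<in> interior C" "b \<in> interior C" "a - t *\<^sub>R b \<in> C"
  shows "t \<le> lower_ratio C a b"
  unfolding lower_ratio_def using cSup_upper[OF _ bdd_above_lower_ratio_candidates] assms by blast

lemma lower_ratio_pos:
  assumes a: "a \<in> interior C" and b: "b \<in> interior C"
  shows "lower_ratio C a b > 0"
  using lower_ratio_candidate_exists[OF a b] lower_ratio_greatest[OF a b] by force

lemma lower_ratio_self:
  assumes a: "a \<in> interior C"
  shows "lower_ratio C a a = 1"
proof (rule antisym)
  have "(1 - lower_ratio C a a) *\<^sub>R a \<in> C" using lower_ratio_mem[OF a a] by (simp add: algebra_simps)
  thus "lower_ratio C a a \<le> 1" using nonneg_of_scaleR_mem[OF a] by fastforce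
  show "1 \<le> lower_ratio C a a" using lower_ratio_greatest[OF a a, of 1] zero_mem by simp
qed

lemma mem_of_one_le_lower_ratio:
  assumes a: "a \<in> interior C" and b: "b \<in> interior C" and ge: "1 \<le> lower_ratio C a b"
  shows "a - b \<in> C"
proof -
  have "b \<in> C" using b interior_subset by blast
  hence "(a - lower_ratio C a b *\<^sub>R b) + (lower_ratio C a b - 1) *\<^sub>R b \<in> C"
    using add_mem[OF lower_ratio_mem[OF a b] scaleR_mem] ge by simp
  thus ?thesis by (simp add: algebra_simps)
qed

lemma lower_ratio_mono:
  assumes a: "a \<in> interior C" and b: "b \<in> interior C" and A: "A \<in> interior C" and B: "B \<in> interior C"
    and aA: "a - p *\<^sub>R A \<in> C" and bB: "q *\<^sub>R B - b \<in> C" and p: "p \<ge> 0" and q: "q > 0"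
  shows "lower_ratio C A B * p / q \<le> lower_ratio C a b"
proof -
  let ?L = "lower_ratio C A B"
  have "(a - p *\<^sub>R A) + p *\<^sub>R (A - ?L *\<^sub>R B) + (?L * p / q) *\<^sub>R (q *\<^sub>R B - b) \<in> C"
    using aA bB p q lower_ratio_mem[OF A B] lower_ratio_pos[OF A B]
    by (intro add_mem scaleR_mem) simp_all
  moreover have "(a - p *\<^sub>R A) + p *\<^sub>R (A - ?L *\<^sub>R B) + (?L * p / q) *\<^sub>R (q *\<^sub>R B - b)
      = a - (?L * p / q) *\<^sub>R b"
    using q by (simp add: algebra_simps)
  ultimately show ?thesis using lower_ratio_greatest[OF a b] by simp
qed

lemma lower_ratio_perturb:
  assumes a: "a \<in> interior C" and b: "b \<in> interior C" and A: "A \<in> interior C" and B: "B \<in> interior C"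
    and aA: "a - (1 - d) *\<^sub>R A \<in> C" "(1 + d) *\<^sub>R A - a \<in> C"
    and bB: "b - (1 - e) *\<^sub>R B \<in> C" "(1 + e) *\<^sub>R B - b \<in> C"
    and d: "0 \<le> d" "d < 1" and e: "0 \<le> e" "e < 1"
  shows "lower_ratio C A B * (1 - d) / (1 + e) \<le> lower_ratio C a b"
    and "lower_ratio C a b \<le> lower_ratio C A B * (1 + d) / (1 - e)"
proof -
  show "lower_ratio C A B * (1 - d) / (1 + e) \<le> lower_ratio C a b"
    using lower_ratio_mono[OF a b A B aA(1) bB(2)] d e by simp
  have Aa: "A - (1 / (1 + d)) *\<^sub>R a \<in> C" using mem_of_scaleR_diff[OF _ aA(2)] d by simp
  have bB': "(1 / (1 - e)) *\<^sub>R b - B \<in> C"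
    using scaleR_mem[OF bB(1), of "1 / (1 - e)"] e by (simp add: scaleR_right_diff_distrib)
  have "lower_ratio C a b * (1 / (1 + d)) / (1 / (1 - e)) \<le> lower_ratio C A B"
    by (rule lower_ratio_mono[OF A B a b Aa bB']) (use d e in simp_all)
  thus "lower_ratio C a b \<le> lower_ratio C A B * (1 + d) / (1 - e)"
    using d e by (simp add: field_simps)
qed

lemma lower_ratio_tendsto:
  assumes a: "\<And>i. a i \<in> interior C" and b: "\<And>i. b i \<in> interior C"
    and A: "A \<in> interior C" and B: "B \<in> interior C" and lim_a: "a \<longlonglongrightarrow> A" and lim_b: "b \<longlonglongrightarrow> B"
  shows "(\<lambda>i. lower_ratio C (a i) (b i)) \<longlonglongrightarrow> lower_ratio C A B"
proof -
  obtain \<rho> where \<rho>: "\<rho> > 0"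
    "\<And>z. z - (1 - norm (z - A) / \<rho>) *\<^sub>R A \<in> C \<and> (1 + norm (z - A) / \<rho>) *\<^sub>R A - z \<in> C"
    using interior_sandwich[OF A] by blast
  obtain \<sigma> where \<sigma>: "\<sigma> > 0"
    "\<And>z. z - (1 - norm (z - B) / \<sigma>) *\<^sub>R B \<in> C \<and> (1 + norm (z - B) / \<sigma>) *\<^sub>R B - z \<in> C"
    using interior_sandwich[OF B] by blast
  define d where "d i = norm (a i - A) / \<rho>" for i
  define e where "e i = norm (b i - B) / \<sigma>" for i
  have d0: "d \<longlonglongrightarrow> 0" unfolding d_def
    by (intro tendsto_divide_zero tendsto_norm_zero LIM_zero lim_a)
  have e0: "e \<longlonglongrightarrow> 0" unfolding e_def
    by (intro tendsto_divide_zero tendsto_norm_zero LIM_zero lim_b)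
  have small: "\<forall>\<^sub>F i in sequentially. d i < 1 \<and> e i < 1"
    using order_tendstoD(2)[OF d0] order_tendstoD(2)[OF e0] by (simp add: eventually_conj)
  have nonneg: "0 \<le> d i" "0 \<le> e i" for i using \<rho> \<sigma> by (simp_all add: d_def e_def)
  let ?L = "lower_ratio C A B"
  have "(\<lambda>i. ?L * (1 - d i) / (1 + e i)) \<longlonglongrightarrow> ?L * (1 - 0) / (1 + 0)"
    by (intro tendsto_intros d0 e0) simp
  moreover have "(\<lambda>i. ?L * (1 + d i) / (1 - e i)) \<longlonglongrightarrow> ?L * (1 + 0) / (1 - 0)"
    by (intro tendsto_intros d0 e0) simp
  moreover have "\<forall>\<^sub>F i in sequentially. ?L * (1 - d i) / (1 + e i) \<le> lower_ratio C (a i) (b i)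
      \<and> lower_ratio C (a i) (b i) \<le> ?L * (1 + d i) / (1 - e i)"
    using small
    by eventually_elim
      (use lower_ratio_perturb[OF a b A B] \<rho>(2) \<sigma>(2) nonneg in \<open>simp add: d_def e_def\<close>)
  ultimately show ?thesis
    using tendsto_sandwich[of "\<lambda>i. ?L * (1 - d i) / (1 + e i)" _ _ "\<lambda>i. ?L * (1 + d i) / (1 - e i)"]
    by (simp add: eventually_conj_iff)
qed


lemma closed_order_interval: "closed (order_interval C a b)"
proof -
  have "order_interval C a b = (\<lambda>u. u - a) -` C \<inter> (\<lambda>u. b - u) -` C"
    by (auto simp: order_interval_def)
  moreover have "closed ((\<lambda>u. u - a) -` C)" "closed ((\<lambda>u. b - u) -` C)"
    using cone_closed by (auto intro!: closed_vimage continuous_intros)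
  ultimately show ?thesis by auto
qed

lemma order_interval_subset_interior:
  assumes "a \<in> interior C"
  shows "order_interval C a b \<subseteq> interior C"
proof
  fix u assume "u \<in> order_interval C a b"
  hence "u - a \<in> C" by (simp add: order_interval_def)
  from interior_add[OF assms this] show "u \<in> interior C" by simp
qed

lemma lower_ratio_order_interval:
  assumes v: "v \<in> interior C" and \<alpha>: "\<alpha> > 0" and \<beta>: "\<beta> > 0"
    and u: "u \<in> order_interval C (\<alpha> *\<^sub>R v) (\<beta> *\<^sub>R v)" and z: "z \<in> order_interval C (\<alpha> *\<^sub>R v) (\<beta> *\<^sub>R v)"
  shows "\<alpha> / \<beta> \<le> lower_ratio C u z" and "lower_ratio C u z \<le> \<beta> / \<alpha>"
proof -
  have "order_interval C (\<alpha> *\<^sub>R v) (\<beta> *\<^sub>R v) \<subseteq> interior C"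
    by (rule order_interval_subset_interior[OF interior_scaleR[OF v \<alpha>]])
  hence uz: "u \<in> interior C" "z \<in> interior C" using u z by blast+
  have u': "u - \<alpha> *\<^sub>R v \<in> C" "\<beta> *\<^sub>R v - u \<in> C" and z': "z - \<alpha> *\<^sub>R v \<in> C" "\<beta> *\<^sub>R v - z \<in> C"
    using u z by (simp_all add: order_interval_def)
  have "(u - \<alpha> *\<^sub>R v) + (\<alpha> / \<beta>) *\<^sub>R (\<beta> *\<^sub>R v - z) \<in> C"
    using add_mem[OF u'(1) scaleR_mem[OF z'(2)]] \<alpha> \<beta> by simp
  moreover have "(u - \<alpha> *\<^sub>R v) + (\<alpha> / \<beta>) *\<^sub>R (\<beta> *\<^sub>R v - z) = u - (\<alpha> / \<beta>) *\<^sub>R z"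
    using \<beta> by (simp add: algebra_simps)
  ultimately show "\<alpha> / \<beta> \<le> lower_ratio C u z" using lower_ratio_greatest[OF uz] by simp
  let ?s = "lower_ratio C u z"
  have "(\<beta> *\<^sub>R v - u) + (u - ?s *\<^sub>R z) + ?s *\<^sub>R (z - \<alpha> *\<^sub>R v) \<in> C"
    using add_mem[OF add_mem[OF u'(2) lower_ratio_mem[OF uz]] scaleR_mem[OF z'(1)]]
      lower_ratio_pos[OF uz] by simp
  moreover have "(\<beta> *\<^sub>R v - u) + (u - ?s *\<^sub>R z) + ?s *\<^sub>R (z - \<alpha> *\<^sub>R v) = (\<beta> - ?s * \<alpha>) *\<^sub>R v"
    by (simp add: algebra_simps)
  ultimately have "0 \<le> \<beta> - ?s * \<alpha>" using nonneg_of_scaleR_mem[OF v] by metis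
  thus "?s \<le> \<beta> / \<alpha>" using \<alpha> by (simp add: le_divide_eq)
qed

end

section \<open>Type K order-preserving homogeneous maps\<close>

locale typeK_cone_map = proper_closed_cone C for C :: "'a::real_normed_vector set" +
  fixes F :: "'a \<Rightarrow> 'a"
  assumes normal: "normal_cone C"
    and maps_interior: "F ` interior C \<subseteq> interior C"
    and typeK: "typeK_order_preserving_on C (interior C) F"
    and homogeneous: "homogeneous_on (interior C) F"
begin

lemma map_mem_interior: "x \<in> interior C \<Longrightarrow> F x \<in> interior C"
  using maps_interior by blast

lemma funpow_mem_interior: "x \<in> interior C \<Longrightarrow> (F ^^ n) x \<in> interior C"
  by (induction n) (auto intro: map_mem_interior)

lemma map_scaleR: "x \<in> interior C \<Longrightarrow> t > 0 \<Longrightarrow> F (t *\<^sub>R x) = t *\<^sub>R F x"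
  using homogeneous interior_scaleR unfolding homogeneous_on_def by blast

lemma typeK_gap:
  assumes "x \<in> interior C" "y \<in> interior C" "y - x \<in> C"
  shows "\<exists>\<epsilon>>0. F y - F x - \<epsilon> *\<^sub>R (y - x) \<in> C"
  using typeK assms unfolding typeK_order_preserving_on_def cone_le_def by blast

lemma order_preserving:
  assumes "x \<in> interior C" "y \<in> interior C" "y - x \<in> C"
  shows "F y - F x \<in> C"
proof -
  obtain \<epsilon> where \<epsilon>: "\<epsilon> > 0" "F y - F x - \<epsilon> *\<^sub>R (y - x) \<in> C" using typeK_gap[OF assms] by blast
  have "(F y - F x - \<epsilon> *\<^sub>R (y - x)) + \<epsilon> *\<^sub>R (y - x) \<in> C"
    by (rule add_mem[OF \<epsilon>(2) scaleR_mem[OF assms(3)]]) (use \<epsilon> in simp)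
  thus ?thesis by simp
qed

lemma map_order_interval:
  assumes a: "a \<in> interior C" and b: "b \<in> interior C" and u: "u \<in> order_interval C a b"
  shows "F u \<in> order_interval C (F a) (F b)"
proof -
  have "u \<in> interior C" using order_interval_subset_interior[OF a] u by blast
  thus ?thesis using order_preserving a b u by (simp add: order_interval_def)
qed

lemma continuous_on_interior: "continuous_on (interior C) F"
proof (rule continuous_on_sequentiallyI)
  fix z a assume z: "\<forall>i. z i \<in> interior C" and a: "a \<in> interior C" and lim: "z \<longlonglongrightarrow> a"
  obtain \<rho> where \<rho>: "\<rho> > 0"
    "\<And>y. y - (1 - norm (y - a) / \<rho>) *\<^sub>R a \<in> C \<and> (1 + norm (y - a) / \<rho>) *\<^sub>R a - y \<in> C"
    using interior_sandwich[OF a] by blast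
  define d where "d i = norm (z i - a) / \<rho>" for i
  have d0: "d \<longlonglongrightarrow> 0" unfolding d_def
    by (intro tendsto_divide_zero tendsto_norm_zero LIM_zero lim)
  have nonneg: "0 \<le> d i" for i using \<rho> by (simp add: d_def)
  show "(\<lambda>i. F (z i)) \<longlonglongrightarrow> F a"
  proof (rule normal_cone_tendsto_squeeze[OF normal])
    show "(\<lambda>i. 1 - d i) \<longlonglongrightarrow> 1" "(\<lambda>i. 1 + d i) \<longlonglongrightarrow> 1"
      using tendsto_diff[OF tendsto_const d0, of 1] tendsto_add[OF tendsto_const d0, of 1] by simp_all
    show "\<forall>\<^sub>F i in sequentially. F (z i) - (1 - d i) *\<^sub>R F a \<in> C \<and> (1 + d i) *\<^sub>R F a - F (z i) \<in> C"
      using order_tendstoD(2)[OF d0, of 1, simplified]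
    proof eventually_elim
      fix i assume "d i < 1"
      hence lo: "(1 - d i) *\<^sub>R a \<in> interior C" and up: "(1 + d i) *\<^sub>R a \<in> interior C"
        using interior_scaleR[OF a] nonneg[of i] by simp_all
      have "F (z i) - F ((1 - d i) *\<^sub>R a) \<in> C" "F ((1 + d i) *\<^sub>R a) - F (z i) \<in> C"
        using order_preserving[OF lo z[rule_format]] order_preserving[OF z[rule_format] up] \<rho>(2)[of "z i"]
        by (simp_all add: d_def)
      thus "F (z i) - (1 - d i) *\<^sub>R F a \<in> C \<and> (1 + d i) *\<^sub>R F a - F (z i) \<in> C"
        using map_scaleR[OF a] \<open>d i < 1\<close> nonneg[of i] by simp
    qed
  qed
qed

lemma funpow_tendsto:
  assumes z: "\<And>i. z i \<in> interior C" and a: "a \<in> interior C" and lim: "z \<longlonglongrightarrow> a"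
  shows "(\<lambda>i. (F ^^ n) (z i)) \<longlonglongrightarrow> (F ^^ n) a"
proof -
  have "continuous_on (interior C) (F ^^ n)"
  proof (induction n)
    case (Suc n)
    thus ?case
      using continuous_on_compose2[OF continuous_on_interior Suc] funpow_mem_interior by auto
  qed simp
  thus ?thesis by (rule continuous_on_tendsto_compose[OF _ lim a]) (simp add: z)
qed

lemma lower_ratio_map_ge:
  assumes a: "a \<in> interior C" and b: "b \<in> interior C"
  shows "lower_ratio C a b \<le> lower_ratio C (F a) (F b)"
proof -
  let ?s = "lower_ratio C a b"
  have s: "?s > 0" using lower_ratio_pos[OF a b] .
  have "F a - F (?s *\<^sub>R b) \<in> C"
    using order_preserving[OF interior_scaleR[OF b s] a lower_ratio_mem[OF a b]] .
  hence "F a - ?s *\<^sub>R F b \<in> C" using map_scaleR[OF b s] by simp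
  thus ?thesis using lower_ratio_greatest[OF map_mem_interior[OF a] map_mem_interior[OF b]] by blast
qed

text \<open>The only place where the strictness in the type K condition is used.\<close>
lemma lower_ratio_stationary_bound:
  assumes a: "a \<in> interior C" and b: "b \<in> interior C"
    and stationary: "lower_ratio C (F a) (F b) = lower_ratio C a b"
    and s: "a - s *\<^sub>R F b \<in> C" "s \<ge> 0" and t: "F a - t *\<^sub>R b \<in> C" "t > 0"
  shows "s * t \<le> (lower_ratio C a b)\<^sup>2"
proof -
  define \<mu> where "\<mu> = lower_ratio C a b"
  have \<mu>: "\<mu> > 0" using lower_ratio_pos[OF a b] by (simp add: \<mu>_def)
  obtain \<epsilon> where \<epsilon>: "\<epsilon> > 0" "F a - F (\<mu> *\<^sub>R b) - \<epsilon> *\<^sub>R (a - \<mu> *\<^sub>R b) \<in> C"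
    using typeK_gap[OF interior_scaleR[OF b \<mu>] a] lower_ratio_mem[OF a b] by (auto simp: \<mu>_def)
  have gap: "F a - \<mu> *\<^sub>R F b - \<epsilon> *\<^sub>R (a - \<mu> *\<^sub>R b) \<in> C"
    using \<epsilon>(2) map_scaleR[OF b \<mu>] by simp
  have "(F a - \<mu> *\<^sub>R F b - \<epsilon> *\<^sub>R (a - \<mu> *\<^sub>R b)) + \<epsilon> *\<^sub>R (a - s *\<^sub>R F b)
      + (\<epsilon> * \<mu> / t) *\<^sub>R (F a - t *\<^sub>R b) \<in> C"
    using add_mem[OF add_mem[OF gap scaleR_mem[OF s(1)]] scaleR_mem[OF t(1)]] \<epsilon>(1) \<mu> t(2) by simp
  moreover have "(F a - \<mu> *\<^sub>R F b - \<epsilon> *\<^sub>R (a - \<mu> *\<^sub>R b)) + \<epsilon> *\<^sub>R (a - s *\<^sub>R F b)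
      + (\<epsilon> * \<mu> / t) *\<^sub>R (F a - t *\<^sub>R b) = (1 + \<epsilon> * \<mu> / t) *\<^sub>R F a - (\<mu> + \<epsilon> * s) *\<^sub>R F b"
    using t(2) by (simp add: algebra_simps)
  ultimately have "(1 + \<epsilon> * \<mu> / t) *\<^sub>R F a - (\<mu> + \<epsilon> * s) *\<^sub>R F b \<in> C" by simp
  moreover have "1 + \<epsilon> * \<mu> / t > 0" using \<epsilon>(1) \<mu> t(2) by (simp add: add_pos_nonneg)
  ultimately have "F a - (1 / (1 + \<epsilon> * \<mu> / t)) *\<^sub>R ((\<mu> + \<epsilon> * s) *\<^sub>R F b) \<in> C"
    using mem_of_scaleR_diff by blast
  hence "(\<mu> + \<epsilon> * s) / (1 + \<epsilon> * \<mu> / t) \<le> \<mu>"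
    using lower_ratio_greatest[OF map_mem_interior[OF a] map_mem_interior[OF b]] stationary
    by (simp add: \<mu>_def)
  moreover have "(\<mu> + \<epsilon> * s) / (1 + \<epsilon> * \<mu> / t) = (\<mu> * t + \<epsilon> * (s * t)) / (t + \<epsilon> * \<mu>)"
    using t(2) by (simp add: field_simps)
  moreover have "t + \<epsilon> * \<mu> > 0" using \<epsilon>(1) \<mu> t(2) by (simp add: add_pos_pos)
  ultimately have "\<mu> * t + \<epsilon> * (s * t) \<le> \<mu> * (t + \<epsilon> * \<mu>)" by (simp add: divide_le_eq)
  hence "\<epsilon> * (s * t) \<le> \<epsilon> * \<mu>\<^sup>2" by (simp add: algebra_simps power2_eq_square)
  thus ?thesis using \<epsilon>(1) by (simp add: \<mu>_def)
qed



lemma eigenvalue_pos: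
  assumes v: "v \<in> interior C" and eigen: "F v = c *\<^sub>R v"
  shows "c > 0"
proof -
  have "c *\<^sub>R v \<in> interior C" using map_mem_interior[OF v] eigen by simp
  hence "0 \<le> c" and "c *\<^sub>R v \<noteq> 0"
    using nonneg_of_scaleR_mem[OF v] interior_subset interior_nonzero by blast+
  thus ?thesis by fastforce
qed

lemma typeK_cone_map_scaleR:
  assumes c: "c > 0"
  shows "typeK_cone_map C (\<lambda>y. c *\<^sub>R F y)"
proof unfold_locales
  show "(\<lambda>y. c *\<^sub>R F y) ` interior C \<subseteq> interior C"
    using map_mem_interior interior_scaleR c by auto
  show "homogeneous_on (interior C) (\<lambda>y. c *\<^sub>R F y)"
    using map_scaleR by (simp add: homogeneous_on_def scaleR_left_commute)
  show "typeK_order_preserving_on C (interior C) (\<lambda>y. c *\<^sub>R F y)"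
    unfolding typeK_order_preserving_on_def cone_le_def
  proof (intro ballI impI)
    fix x y assume "x \<in> interior C" "y \<in> interior C" "y - x \<in> C"
    then obtain \<epsilon> where \<epsilon>: "\<epsilon> > 0" "F y - F x - \<epsilon> *\<^sub>R (y - x) \<in> C" using typeK_gap by blast
    have "c *\<^sub>R (F y - F x - \<epsilon> *\<^sub>R (y - x)) \<in> C" using scaleR_mem[OF \<epsilon>(2)] c by simp
    hence "c *\<^sub>R F y - c *\<^sub>R F x - (c * \<epsilon>) *\<^sub>R (y - x) \<in> C" by (simp add: algebra_simps)
    thus "\<exists>\<epsilon>>0. c *\<^sub>R F y - c *\<^sub>R F x - \<epsilon> *\<^sub>R (y - x) \<in> C" using \<epsilon>(1) c by (metis mult_pos_pos)
  qed
qed (fact closed_cone zero_notin_interior normal)+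

lemma funpow_normalized:
  assumes g: "\<And>y. y \<in> interior C \<Longrightarrow> g y = sgn (F y)" and x: "x \<in> interior C"
  shows "(g ^^ Suc n) x = sgn ((F ^^ Suc n) x)"
proof (induction n)
  case 0 show ?case using g[OF x] by simp
next
  case (Suc n)
  define y where "y = (F ^^ Suc n) x"
  have y: "y \<in> interior C" unfolding y_def by (rule funpow_mem_interior[OF x])
  have ny: "norm y > 0" using interior_nonzero[OF y] by simp
  hence "sgn y \<in> interior C" and "F (sgn y) = (1 / norm y) *\<^sub>R F y"
    using interior_scaleR[OF y] map_scaleR[OF y] by (simp_all add: sgn_div_norm divide_inverse_commute)
  hence "g (sgn y) = sgn (F y)" using g ny by (simp add: sgn_scaleR)
  thus ?case using Suc by (simp add: y_def)
qed

lemma fixed_of_shift_invariant_ratios: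
  assumes w: "w \<in> interior C"
    and shift: "\<And>i j. lower_ratio C ((F ^^ Suc i) w) ((F ^^ Suc j) w) = lower_ratio C ((F ^^ i) w) ((F ^^ j) w)"
    and c: "c > 0" and bound: "\<And>i j. c \<le> lower_ratio C ((F ^^ i) w) ((F ^^ j) w)"
  shows "F w = w"
proof -
  define W where "W k = (F ^^ k) w" for k
  have W: "W k \<in> interior C" for k using funpow_mem_interior[OF w] by (simp add: W_def)
  have FW: "F (W k) = W (Suc k)" for k by (simp add: W_def)
  have shiftW: "lower_ratio C (W (Suc i)) (W (Suc j)) = lower_ratio C (W i) (W j)" for i j
    using shift by (simp add: W_def)
  have boundW: "c \<le> lower_ratio C (W i) (W j)" for i j unfolding W_def by (rule bound)
  define m where "m k = lower_ratio C (W k) (W 0)" for k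
  define l where "l k = lower_ratio C (W 0) (W k)" for k
  have "1 \<le> m 1"
  proof (rule log_concave_bounded_below_ge_one[OF _ _ _ _ c])
    show "m k > 0" "c \<le> m k" for k using lower_ratio_pos[OF W W] boundW by (simp_all add: m_def)
    show "m 0 = 1" using lower_ratio_self[OF W] by (simp add: m_def)
    show "m j * m (j + 2) \<le> (m (j + 1))\<^sup>2" for j
      using lower_ratio_stationary_bound[OF W W, of "Suc j" 0 "m j" "m (j + 2)"]
        lower_ratio_mem[OF W W, of "Suc j" 1] lower_ratio_mem[OF W W, of "j + 2" 0]
        lower_ratio_pos[OF W W] shiftW[of j 0] shiftW[of "Suc j" 0]
      by (simp add: m_def FW less_imp_le)
  qed
  hence up: "W 1 - W 0 \<in> C" using mem_of_one_le_lower_ratio[OF W W] by (simp add: m_def)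
  have "1 \<le> l 1"
  proof (rule log_concave_bounded_below_ge_one[OF _ _ _ _ c])
    show "l k > 0" "c \<le> l k" for k using lower_ratio_pos[OF W W] boundW by (simp_all add: l_def)
    show "l 0 = 1" using lower_ratio_self[OF W] by (simp add: l_def)
    show "l j * l (j + 2) \<le> (l (j + 1))\<^sup>2" for j
      using lower_ratio_stationary_bound[OF W W, of 0 "Suc j" "l (j + 2)" "l j"]
        lower_ratio_mem[OF W W, of 0 "j + 2"] lower_ratio_mem[OF W W, of 1 "Suc j"]
        lower_ratio_pos[OF W W] shiftW[of 0 j] shiftW[of 0 "Suc j"]
      by (simp add: l_def FW less_imp_le mult.commute)
  qed
  hence "W 0 - W 1 \<in> C" using mem_of_one_le_lower_ratio[OF W W] by (simp add: l_def)
  hence "W 1 - W 0 = 0" using pointed[OF up] by simp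
  thus ?thesis by (simp add: W_def)
qed

end

section \<open>Orbits of a type K map with a fixed point\<close>

locale typeK_orbit = typeK_cone_map C F for C :: "'a::real_normed_vector set" and F +
  fixes v x :: 'a and \<alpha> \<beta> :: real
  assumes fixed_point: "v \<in> interior C" "F v = v"
    and \<alpha>: "\<alpha> > 0" and \<beta>: "\<beta> > 0"
    and start: "x \<in> order_interval C (\<alpha> *\<^sub>R v) (\<beta> *\<^sub>R v)"
begin

abbreviation invariant_interval :: "'a set" where
  "invariant_interval \<equiv> order_interval C (\<alpha> *\<^sub>R v) (\<beta> *\<^sub>R v)"

lemma invariant_interval_subset_interior: "invariant_interval \<subseteq> interior C"
  by (rule order_interval_subset_interior[OF interior_scaleR[OF fixed_point(1) \<alpha>]])

lemma funpow_invariant_interval: "u \<in> invariant_interval \<Longrightarrow> (F ^^ n) u \<in> invariant_interval"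
proof (induction n)
  case (Suc n)
  have "F ((F ^^ n) u) \<in> order_interval C (F (\<alpha> *\<^sub>R v)) (F (\<beta> *\<^sub>R v))"
    using map_order_interval[OF interior_scaleR[OF fixed_point(1) \<alpha>] interior_scaleR[OF fixed_point(1) \<beta>]]
      Suc by blast
  thus ?case using map_scaleR[OF fixed_point(1)] fixed_point(2) \<alpha> \<beta> by simp
qed simp

lemma orbit_mem: "(F ^^ n) x \<in> invariant_interval"
  using funpow_invariant_interval[OF start] .

lemma orbit_mem_interior: "(F ^^ n) x \<in> interior C"
  using orbit_mem invariant_interval_subset_interior by blast

lemma limit_point_mem:
  assumes "(\<lambda>k. (F ^^ r k) x) \<longlonglongrightarrow> w"
  shows "w \<in> invariant_interval"
  using closed_sequentially[OF closed_order_interval _ assms] orbit_mem by blast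

definition limit_ratio :: "nat \<Rightarrow> nat \<Rightarrow> real" where
  "limit_ratio i j = lim (\<lambda>n. lower_ratio C ((F ^^ (n + i)) x) ((F ^^ (n + j)) x))"

lemma limit_ratio:
  "(\<lambda>n. lower_ratio C ((F ^^ (n + i)) x) ((F ^^ (n + j)) x)) \<longlonglongrightarrow> limit_ratio i j"
proof -
  let ?r = "\<lambda>n. lower_ratio C ((F ^^ (n + i)) x) ((F ^^ (n + j)) x)"
  have "incseq ?r"
    using lower_ratio_map_ge[OF orbit_mem_interior orbit_mem_interior] by (intro incseq_SucI) simp
  moreover have "bdd_above (range ?r)"
    using lower_ratio_order_interval(2)[OF fixed_point(1) \<alpha> \<beta> orbit_mem orbit_mem]
    by (intro bdd_aboveI) blast
  ultimately have "convergent ?r" using LIMSEQ_incseq_SUP convergent_def by blast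
  thus ?thesis by (simp add: limit_ratio_def convergent_LIMSEQ_iff)
qed

lemma limit_ratio_Suc: "limit_ratio (Suc i) (Suc j) = limit_ratio i j"
proof -
  have "(\<lambda>n. lower_ratio C ((F ^^ (Suc n + i)) x) ((F ^^ (Suc n + j)) x)) \<longlonglongrightarrow> limit_ratio i j"
    using LIMSEQ_Suc[OF limit_ratio] .
  thus ?thesis using limit_ratio[of "Suc i" "Suc j"] LIMSEQ_unique by fastforce
qed

lemma lower_ratio_limit_point:
  assumes r: "strict_mono r" and lim: "(\<lambda>k. (F ^^ r k) x) \<longlonglongrightarrow> w"
  shows "lower_ratio C ((F ^^ i) w) ((F ^^ j) w) = limit_ratio i j"
proof -
  have w: "w \<in> interior C" using limit_point_mem[OF lim] invariant_interval_subset_interior by blast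
  have iterate: "(\<lambda>k. (F ^^ (r k + n)) x) \<longlonglongrightarrow> (F ^^ n) w" for n
    using funpow_tendsto[OF orbit_mem_interior w lim, of n] by (simp add: funpow_add add.commute)
  have "(\<lambda>k. lower_ratio C ((F ^^ (r k + i)) x) ((F ^^ (r k + j)) x))
      \<longlonglongrightarrow> lower_ratio C ((F ^^ i) w) ((F ^^ j) w)"
    using lower_ratio_tendsto[OF orbit_mem_interior orbit_mem_interior
        funpow_mem_interior[OF w] funpow_mem_interior[OF w] iterate iterate] .
  moreover have "(\<lambda>k. lower_ratio C ((F ^^ (r k + i)) x) ((F ^^ (r k + j)) x)) \<longlonglongrightarrow> limit_ratio i j"
    using LIMSEQ_subseq_LIMSEQ[OF limit_ratio r] by (simp add: comp_def)
  ultimately show ?thesis using LIMSEQ_unique by blast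
qed

lemma limit_point_fixed:
  assumes r: "strict_mono r" and lim: "(\<lambda>k. (F ^^ r k) x) \<longlonglongrightarrow> w"
  shows "F w = w"
proof (rule fixed_of_shift_invariant_ratios)
  have w: "w \<in> invariant_interval" using limit_point_mem[OF lim] .
  thus "w \<in> interior C" using invariant_interval_subset_interior by blast
  show "lower_ratio C ((F ^^ Suc i) w) ((F ^^ Suc j) w) = lower_ratio C ((F ^^ i) w) ((F ^^ j) w)" for i j
    using lower_ratio_limit_point[OF r lim] limit_ratio_Suc by presburger
  show "\<alpha> / \<beta> \<le> lower_ratio C ((F ^^ i) w) ((F ^^ j) w)" for i j
    using lower_ratio_order_interval(1)[OF fixed_point(1) \<alpha> \<beta>] funpow_invariant_interval[OF w] by blast
  show "\<alpha> / \<beta> > 0" using \<alpha> \<beta> by simp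
qed

lemma orbit_tendsto_fixed_limit_point:
  assumes r: "strict_mono r" and lim: "(\<lambda>k. (F ^^ r k) x) \<longlonglongrightarrow> w" and fixed: "F w = w"
  shows "(\<lambda>n. (F ^^ n) x) \<longlonglongrightarrow> w"
proof -
  have w: "w \<in> interior C" using limit_point_mem[OF lim] invariant_interval_subset_interior by blast
  define t where "t n = lower_ratio C ((F ^^ n) x) w" for n
  define u where "u n = lower_ratio C w ((F ^^ n) x)" for n
  have "incseq t" "incseq u"
    using lower_ratio_map_ge[OF orbit_mem_interior w] lower_ratio_map_ge[OF w orbit_mem_interior] fixed
    by (auto intro!: incseq_SucI simp: t_def u_def)
  moreover have "(t \<circ> r) \<longlonglongrightarrow> 1" "(u \<circ> r) \<longlonglongrightarrow> 1"
    using lower_ratio_tendsto[OF orbit_mem_interior w w w lim tendsto_const]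
      lower_ratio_tendsto[OF w orbit_mem_interior w w tendsto_const lim] lower_ratio_self[OF w]
    by (simp_all add: t_def u_def comp_def)
  ultimately have t: "t \<longlonglongrightarrow> 1" and u: "u \<longlonglongrightarrow> 1"
    using incseq_tendsto_of_subseq r by blast+
  show ?thesis
  proof (rule normal_cone_tendsto_squeeze[OF normal t])
    show "(\<lambda>n. 1 / u n) \<longlonglongrightarrow> 1" using tendsto_divide[OF tendsto_const u, of 1] by simp
    show "\<forall>\<^sub>F n in sequentially. (F ^^ n) x - t n *\<^sub>R w \<in> C \<and> (1 / u n) *\<^sub>R w - (F ^^ n) x \<in> C"
    proof (intro always_eventually allI conjI)
      fix n
      show "(F ^^ n) x - t n *\<^sub>R w \<in> C" using lower_ratio_mem[OF orbit_mem_interior w] by (simp add: t_def)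
      have "u n > 0" "w - u n *\<^sub>R (F ^^ n) x \<in> C"
        using lower_ratio_pos[OF w orbit_mem_interior] lower_ratio_mem[OF w orbit_mem_interior]
        by (simp_all add: u_def)
      thus "(1 / u n) *\<^sub>R w - (F ^^ n) x \<in> C"
        using scaleR_mem[of "w - u n *\<^sub>R (F ^^ n) x" "1 / u n"] by (simp add: scaleR_right_diff_distrib)
    qed
  qed
qed

lemma orbit_converges:
  assumes S: "compact S" and normalized_orbit: "\<And>n. sgn ((F ^^ n) x) \<in> S"
  shows "\<exists>w\<in>interior C. F w = w \<and> (\<lambda>n. (F ^^ n) x) \<longlonglongrightarrow> w"
proof -
  obtain \<kappa> where \<kappa>: "\<And>a b. a \<in> C \<Longrightarrow> b - a \<in> C \<Longrightarrow> norm a \<le> \<kappa> * norm b"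
    using normal by (auto simp: normal_cone_def cone_le_def)
  define T where "T = (\<lambda>p. fst p *\<^sub>R snd p) ` ({0 .. \<kappa> * norm (\<beta> *\<^sub>R v)} \<times> S)"
  have "compact T" unfolding T_def
    by (intro compact_continuous_image compact_Times compact_Icc S continuous_intros)
  moreover have "(F ^^ n) x \<in> T" for n
  proof -
    have "(F ^^ n) x \<in> C" "\<beta> *\<^sub>R v - (F ^^ n) x \<in> C"
      using orbit_mem_interior[THEN set_mp[OF interior_subset]] orbit_mem
      by (simp_all add: order_interval_def)
    hence "norm ((F ^^ n) x) \<le> \<kappa> * norm (\<beta> *\<^sub>R v)" by (rule \<kappa>)
    hence "(norm ((F ^^ n) x), sgn ((F ^^ n) x)) \<in> {0 .. \<kappa> * norm (\<beta> *\<^sub>R v)} \<times> S"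
      using normalized_orbit by simp
    moreover have "(F ^^ n) x = norm ((F ^^ n) x) *\<^sub>R sgn ((F ^^ n) x)"
      using interior_nonzero[OF orbit_mem_interior] by (simp add: sgn_div_norm)
    ultimately show ?thesis unfolding T_def by (metis (no_types, lifting) fst_conv image_eqI snd_conv)
  qed
  ultimately obtain w r where "strict_mono r" "((\<lambda>n. (F ^^ n) x) \<circ> r) \<longlonglongrightarrow> w"
    using compact_imp_seq_compact seq_compact_def by metis
  hence r: "strict_mono r" and lim: "(\<lambda>k. (F ^^ r k) x) \<longlonglongrightarrow> w" by (simp_all add: comp_def)
  show ?thesis
    using limit_point_fixed[OF r lim] orbit_tendsto_fixed_limit_point[OF r lim]
      limit_point_mem[OF lim] invariant_interval_subset_interior by blast
qed

end

context typeK_cone_map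
begin

lemma normalized_orbit_converges:
  assumes v: "v \<in> interior C" "F v = v" and x: "x \<in> interior C"
    and g: "\<And>y. y \<in> interior C \<Longrightarrow> g y = sgn (F y)"
    and compact: "compact (closure {(g ^^ k) x | k. True})"
  shows "\<exists>w\<in>interior C. F w = w \<and> (\<lambda>k. (g ^^ k) x) \<longlonglongrightarrow> sgn w"
proof -
  obtain \<alpha> where \<alpha>: "\<alpha> > 0" "x - \<alpha> *\<^sub>R v \<in> C"
    using lower_ratio_candidate_exists[OF x v(1)] by blast
  obtain s where s: "s > 0" "v - s *\<^sub>R x \<in> C"
    using lower_ratio_candidate_exists[OF v(1) x] by blast
  have "(1 / s) *\<^sub>R v - x \<in> C"
    using scaleR_mem[OF s(2), of "1 / s"] s(1) by (simp add: scaleR_right_diff_distrib)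
  hence "x \<in> order_interval C (\<alpha> *\<^sub>R v) ((1 / s) *\<^sub>R v)"
    using \<alpha>(2) by (simp add: order_interval_def)
  hence orbit: "typeK_orbit C F v x \<alpha> (1 / s)"
    using v \<alpha>(1) s(1) typeK_cone_map_axioms by (simp add: typeK_orbit_def typeK_orbit_axioms_def)
  have "sgn ((F ^^ n) x) \<in> insert (sgn x) (closure {(g ^^ k) x | k. True})" for n
  proof (cases n)
    case (Suc m)
    have orbit_point: "(g ^^ Suc m) x \<in> closure {(g ^^ k) x | k. True}"
      by (rule closure_subset[THEN subsetD]) blast
    show ?thesis using orbit_point funpow_normalized[OF g x, of m] Suc by (metis insertI2)
  qed simp
  then obtain w where w: "w \<in> interior C" "F w = w" and lim: "(\<lambda>n. (F ^^ n) x) \<longlonglongrightarrow> w"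
    using typeK_orbit.orbit_converges[OF orbit] compact by (meson compact_insert)
  have "(\<lambda>k. sgn ((F ^^ Suc k) x)) \<longlonglongrightarrow> sgn w"
    using LIMSEQ_Suc[OF lim] interior_nonzero[OF w(1)] by (intro tendsto_sgn)
  hence "(\<lambda>k. (g ^^ Suc k) x) \<longlonglongrightarrow> sgn w" using funpow_normalized[OF g x] by simp
  hence "(\<lambda>k. (g ^^ k) x) \<longlonglongrightarrow> sgn w" by (rule LIMSEQ_imp_Suc)
  thus ?thesis using w by blast
qed

end

theorem mainTheorem5:
  fixes C :: "'a::banach set" and f :: "'a \<Rightarrow> 'a" and g :: "'a \<Rightarrow> 'a"
  assumes "closed_cone C"
    and "normal_cone C"
    and "interior C \<noteq> {}"
    and "f ` interior C \<subseteq> interior C"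
    and "typeK_order_preserving_on C (interior C) f"
    and "homogeneous_on (interior C) f"
    and "\<And>x. x \<in> interior C \<Longrightarrow> g x = (1 / norm (f x)) *\<^sub>R f x"
    and "\<exists>v. eigenvector_on (interior C) f v"
  shows "\<forall>x\<in>interior C. compact (closure {(g ^^ k) x | k::nat. True}) \<longrightarrow>
           (\<exists>v. eigenvector_on (interior C) f v \<and> (\<lambda>k. (g ^^ k) x) \<longlonglongrightarrow> v)"
proof (intro ballI impI)
  fix x assume x: "x \<in> interior C" and compact: "compact (closure {(g ^^ k) x | k::nat. True})"
  obtain v c where v: "v \<in> interior C" "v \<noteq> 0" and eigen: "f v = c *\<^sub>R v"
    using assms(8) unfolding eigenvector_on_def by blast
  interpret typeK_cone_map C f
    using assms(1,2,4,5,6) zero_notin_interior_cone[OF assms(1) v(2)] by unfold_locales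
  have c: "c > 0" using eigenvalue_pos[OF v(1) eigen] .
  interpret F: typeK_cone_map C "\<lambda>y. (1 / c) *\<^sub>R f y" using typeK_cone_map_scaleR c by simp
  have g: "g y = sgn ((1 / c) *\<^sub>R f y)" if "y \<in> interior C" for y
    using assms(7)[OF that] c by (simp add: sgn_scaleR sgn_div_norm divide_inverse_commute)
  obtain w where w: "w \<in> interior C" "(1 / c) *\<^sub>R f w = w" and lim: "(\<lambda>k. (g ^^ k) x) \<longlonglongrightarrow> sgn w"
    using F.normalized_orbit_converges[OF v(1) _ x g compact] eigen c by auto
  have "f w = c *\<^sub>R ((1 / c) *\<^sub>R f w)" using c by simp
  hence fw: "f w = c *\<^sub>R w" using w(2) by simp
  have "norm w > 0" using interior_nonzero[OF w(1)] by simp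
  hence "sgn w \<in> interior C" "sgn w \<noteq> 0" "f (sgn w) = c *\<^sub>R sgn w"
    using interior_scaleR[OF w(1)] map_scaleR[OF w(1)] fw
    by (simp_all add: sgn_div_norm divide_inverse_commute scaleR_left_commute)
  thus "\<exists>v. eigenvector_on (interior C) f v \<and> (\<lambda>k. (g ^^ k) x) \<longlonglongrightarrow> v"
    using lim unfolding eigenvector_on_def by blast
qed

end
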